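(* Let $X$ be a planar Peano continuum and $x_0\in X$. If $x\in X$ is a wedge point for both of the pseudo-Hawaiian earring subgroups $H_1$ and $H_2$ of $\pi_1(X,x_0)$, then $H_1\sim H_2$.
   Context: $\mathbf E$ is the Hawaiian earring (union of circles centered at $(0,1/n)$ of radius $1/n$ in $\mathbb R^2$, basepoint $0$), $\mathbb H=\pi_1(\mathbf E,0)$. For a path $\alpha$, $\hat\alpha([g])=[\overline\alpha*g*\alpha]$. A pseudo-Hawaiian earring subgroup of $\pi_1(X,x_0)$ is a subgroup which is an uncountable homomorphic image of $\mathbb H$. A point $x$ is a wedge point of such $H$ if there exist a surjective homomorphism $\psi:\mathbb H\to H$, a continuous $f:(\mathbf E,0)\to(X,x)$ and a path $\alpha$ from $x$ to $x_0$ with $\psi=\hat\alpha\circ f_*$. $H_1\sim H_2$ means there exist $g\in\pi_1(X,x_0)$ and a pseudo-Hawaiian earring subgroup $H$ of $\pi_1(X,x_0)$ with $H_1\subset H$ and $gH_2g^{-1}\subset H$. *)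

theory Defs
  imports "HOL-Analysis.Analysis" "HOL-Algebra.Group"
begin

definition loops :: "'a::topological_space set \<Rightarrow> 'a \<Rightarrow> (real \<Rightarrow> 'a) set" where
  "loops X x0 = {g. path g \<and> path_image g \<subseteq> X \<and> pathstart g = x0 \<and> pathfinish g = x0}"

definition path_class :: "'a::topological_space set \<Rightarrow> (real \<Rightarrow> 'a) \<Rightarrow> (real \<Rightarrow> 'a) set" where
  "path_class X g = {h. homotopic_paths X g h}"

definition rep :: "(real \<Rightarrow> 'a) set \<Rightarrow> real \<Rightarrow> 'a" where
  "rep A = (SOME g. g \<in> A)"

definition fundamental_group :: "'a::topological_space set \<Rightarrow> 'a \<Rightarrow> ((real \<Rightarrow> 'a) set) monoid" where
  "fundamental_group X x0 =
     \<lparr> carrier = path_class X ` loops X x0,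
       mult = (\<lambda>A B. path_class X (rep A +++ rep B)),
       one = path_class X (\<lambda>t. x0) \<rparr>"

definition induced_map :: "'b::topological_space set \<Rightarrow> ('a::topological_space \<Rightarrow> 'b)
    \<Rightarrow> (real \<Rightarrow> 'a) set \<Rightarrow> (real \<Rightarrow> 'b) set" where
  "induced_map Y f A = path_class Y (f \<circ> rep A)"

definition basepoint_change :: "'a::topological_space set \<Rightarrow> (real \<Rightarrow> 'a)
    \<Rightarrow> (real \<Rightarrow> 'a) set \<Rightarrow> (real \<Rightarrow> 'a) set" where
  "basepoint_change X \<alpha> A = path_class X (reversepath \<alpha> +++ rep A +++ \<alpha>)"

definition hawaiian_earring :: "complex set" where
  "hawaiian_earring = (\<Union>n\<in>{1::nat..}. sphere (\<i> * complex_of_real (1 / real n)) (1 / real n))"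

abbreviation HE_group :: "((real \<Rightarrow> complex) set) monoid" where
  "HE_group \<equiv> fundamental_group hawaiian_earring 0"

definition pseudo_HE_subgroup :: "complex set \<Rightarrow> complex \<Rightarrow> (real \<Rightarrow> complex) set set \<Rightarrow> bool" where
  "pseudo_HE_subgroup X x0 H \<longleftrightarrow>
     subgroup H (fundamental_group X x0) \<and> uncountable H \<and>
     (\<exists>\<psi>. \<psi> \<in> hom HE_group (fundamental_group X x0) \<and> \<psi> ` carrier HE_group = H)"

definition wedge_point :: "complex set \<Rightarrow> complex \<Rightarrow> (real \<Rightarrow> complex) set set \<Rightarrow> complex \<Rightarrow> bool" where
  "wedge_point X x0 H x \<longleftrightarrow>
     (\<exists>\<psi> f \<alpha>. \<psi> \<in> hom HE_group (fundamental_group X x0) \<and> \<psi> ` carrier HE_group = H \<and>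
        continuous_on hawaiian_earring f \<and> f ` hawaiian_earring \<subseteq> X \<and> f 0 = x \<and>
        path \<alpha> \<and> path_image \<alpha> \<subseteq> X \<and> pathstart \<alpha> = x \<and> pathfinish \<alpha> = x0 \<and>
        (\<forall>c\<in>carrier HE_group. \<psi> c = basepoint_change X \<alpha> (induced_map X f c)))"

definition HE_equiv :: "complex set \<Rightarrow> complex \<Rightarrow> (real \<Rightarrow> complex) set set
    \<Rightarrow> (real \<Rightarrow> complex) set set \<Rightarrow> bool" where
  "HE_equiv X x0 H1 H2 \<longleftrightarrow>
     (\<exists>g\<in>carrier (fundamental_group X x0). \<exists>H. pseudo_HE_subgroup X x0 H \<and> H1 \<subseteq> H \<and>
        (\<lambda>h. g \<otimes>\<^bsub>fundamental_group X x0\<^esub> h \<otimes>\<^bsub>fundamental_group X x0\<^esub>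
              inv\<^bsub>fundamental_group X x0\<^esub> g) ` H2 \<subseteq> H)"

definition planar_peano_continuum :: "complex set \<Rightarrow> bool" where
  "planar_peano_continuum X \<longleftrightarrow> X \<noteq> {} \<and> compact X \<and> connected X \<and> locally connected X"

end

theory Submission
  imports Defs
begin

text \<open>Running the odd circles of the
  earring (suitably rescaled) through \<open>f\<^sub>1\<close> and the even ones through \<open>f\<^sub>2\<close> gives a single
  continuous map \<open>F : \<E> \<rightarrow> X\<close>; it is continuous at \<open>0\<close> because the rescalings at most double
  the distance to \<open>0\<close>. Then \<open>f\<^sub>1\<close> and \<open>f\<^sub>2\<close> factor through \<open>F\<close> via continuous self-maps of
  \<open>\<E>\<close> fixing \<open>0\<close>, so the image \<open>H\<close> of \<open>c \<mapsto> \<alpha>\<^sup>^(F\<^sub>* c)\<close> contains \<open>H\<^sub>1\<close> and the conjugate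
  of \<open>H\<^sub>2\<close> by the class of \<open>\<alpha>\<^sup>-\<beta>\<close>, and \<open>H\<close> is uncountable because it contains \<open>H\<^sub>1\<close>.\<close>

section \<open>Paths and the fundamental group\<close>

definition path_in :: "'a::real_normed_vector set \<Rightarrow> 'a \<Rightarrow> 'a \<Rightarrow> (real \<Rightarrow> 'a) \<Rightarrow> bool" where
  "path_in X a b p \<longleftrightarrow> path p \<and> path_image p \<subseteq> X \<and> pathstart p = a \<and> pathfinish p = b"

lemma path_in_join: "path_in X a b p \<Longrightarrow> path_in X b c q \<Longrightarrow> path_in X a c (p +++ q)"
  unfolding path_in_def by (auto simp: path_image_join)

lemma path_in_reversepath: "path_in X a b p \<Longrightarrow> path_in X b a (reversepath p)"
  unfolding path_in_def by auto

lemma path_in_linepath: "a \<in> X \<Longrightarrow> path_in X a a (linepath a a)"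
  unfolding path_in_def by auto

lemma path_in_linepath_start: "path_in X a b p \<Longrightarrow> path_in X a a (linepath a a)"
  unfolding path_in_def by (auto simp: path_image_def pathstart_def)

lemma path_in_homotopic: "homotopic_paths X p q \<Longrightarrow> path_in X a b p \<Longrightarrow> path_in X a b q"
  unfolding path_in_def
  by (metis homotopic_paths_imp_path homotopic_paths_imp_subset
      homotopic_paths_imp_pathstart homotopic_paths_imp_pathfinish)

lemma path_in_compose:
  "path_in E a b g \<Longrightarrow> continuous_on E f \<Longrightarrow> f ` E \<subseteq> X \<Longrightarrow> path_in X (f a) (f b) (f \<circ> g)"
  unfolding path_in_def
  by (auto simp: path_image_compose pathstart_compose pathfinish_compose
      intro: path_continuous_image continuous_on_subset)

lemma path_in_imp_mem: "path_in E a b g \<Longrightarrow> t \<in> {0..1} \<Longrightarrow> g t \<in> E"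
  unfolding path_in_def path_image_def by auto

lemma homotopic_paths_refl_path_in: "path_in X a b p \<Longrightarrow> homotopic_paths X p p"
  unfolding path_in_def by simp

lemma homotopic_paths_assoc_path_in:
  "path_in X a b p \<Longrightarrow> path_in X b c q \<Longrightarrow> path_in X c d r \<Longrightarrow>
   homotopic_paths X (p +++ (q +++ r)) ((p +++ q) +++ r)"
  unfolding path_in_def by (intro homotopic_paths_assoc) auto

lemma homotopic_paths_assoc_path_in':
  "path_in X a b p \<Longrightarrow> path_in X b c q \<Longrightarrow> path_in X c d r \<Longrightarrow>
   homotopic_paths X ((p +++ q) +++ r) (p +++ (q +++ r))"
  using homotopic_paths_assoc_path_in homotopic_paths_sym by metis

lemma homotopic_paths_lid_path_in: "path_in X a b p \<Longrightarrow> homotopic_paths X (linepath a a +++ p) p"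
  unfolding path_in_def by (intro homotopic_paths_lid') auto

lemma homotopic_paths_rinv_path_in:
  "path_in X a b p \<Longrightarrow> homotopic_paths X (p +++ reversepath p) (linepath a a)"
  unfolding path_in_def using homotopic_paths_rinv by metis

lemma homotopic_paths_linv_path_in:
  "path_in X a b p \<Longrightarrow> homotopic_paths X (reversepath p +++ p) (linepath b b)"
  unfolding path_in_def using homotopic_paths_linv by metis

lemma homotopic_paths_join_path_in:
  "homotopic_paths X p p' \<Longrightarrow> homotopic_paths X q q' \<Longrightarrow> path_in X a b p \<Longrightarrow> path_in X b c q \<Longrightarrow>
   homotopic_paths X (p +++ q) (p' +++ q')"
  unfolding path_in_def by (intro homotopic_paths_join) auto

lemma homotopic_paths_cancel_middle:
  assumes m: "path_in X u v m" and n: "path_in X v w n" and k: "path_in X w v k"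
    and r: "path_in X v z r" and nk: "homotopic_paths X (n +++ k) (linepath v v)"
  shows "homotopic_paths X ((m +++ n) +++ (k +++ r)) (m +++ r)"
proof -
  have kr: "path_in X w z (k +++ r)" using k r path_in_join by blast
  have nk_in: "path_in X v v (n +++ k)" using k n path_in_join by blast
  note refl_m = homotopic_paths_refl_path_in[OF m]
  have "homotopic_paths X ((m +++ n) +++ (k +++ r)) (m +++ (n +++ (k +++ r)))"
    by (rule homotopic_paths_assoc_path_in'[OF m n kr])
  also have "homotopic_paths X \<dots> (m +++ ((n +++ k) +++ r))"
    by (rule homotopic_paths_join_path_in[OF refl_m homotopic_paths_assoc_path_in[OF n k r]
          m path_in_join[OF n kr]])
  also have "homotopic_paths X \<dots> (m +++ (linepath v v +++ r))"
    by (rule homotopic_paths_join_path_in[OF refl_m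
          homotopic_paths_join_path_in[OF nk homotopic_paths_refl_path_in[OF r] nk_in r]
          m path_in_join[OF nk_in r]])
  also have "homotopic_paths X \<dots> (m +++ r)"
    by (rule homotopic_paths_join_path_in[OF refl_m homotopic_paths_lid_path_in[OF r]
          m path_in_join[OF path_in_linepath_start[OF r] r]])
  finally show ?thesis .
qed

lemma homotopic_paths_conjugate_join:
  assumes a: "path_in X x0 x a" and b: "path_in X x x0 b" and p: "path_in X x x p"
    and q: "path_in X x x q" and ba: "homotopic_paths X (b +++ a) (linepath x x)"
  shows "homotopic_paths X ((a +++ (p +++ b)) +++ (a +++ (q +++ b))) (a +++ ((p +++ q) +++ b))"
proof -
  have ap: "path_in X x0 x (a +++ p)" using a p path_in_join by blast
  have qb: "path_in X x x0 (q +++ b)" using q b path_in_join by blast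
  have "homotopic_paths X ((a +++ (p +++ b)) +++ (a +++ (q +++ b)))
      (((a +++ p) +++ b) +++ (a +++ (q +++ b)))"
    by (rule homotopic_paths_join_path_in[OF homotopic_paths_assoc_path_in[OF a p b]
          homotopic_paths_refl_path_in[OF path_in_join[OF a qb]]])
      (auto intro!: path_in_join a b p q)
  also have "homotopic_paths X \<dots> ((a +++ p) +++ (q +++ b))"
    by (rule homotopic_paths_cancel_middle[OF ap b a qb ba])
  also have "homotopic_paths X \<dots> (a +++ (p +++ (q +++ b)))"
    by (rule homotopic_paths_assoc_path_in'[OF a p qb])
  also have "homotopic_paths X \<dots> (a +++ ((p +++ q) +++ b))"
    by (rule homotopic_paths_join_path_in[OF homotopic_paths_refl_path_in[OF a]
          homotopic_paths_assoc_path_in[OF p q b] a]) (auto intro!: path_in_join p q b)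
  finally show ?thesis .
qed

lemma homotopic_paths_change_conjugator:
  assumes a: "path_in X x0 x a" and b: "path_in X x x0 b" and c: "path_in X x0 x c"
    and d: "path_in X x x0 d" and p: "path_in X x x p"
    and bc: "homotopic_paths X (b +++ c) (linepath x x)"
    and da: "homotopic_paths X (d +++ a) (linepath x x)"
  shows "homotopic_paths X (((a +++ b) +++ (c +++ (p +++ b))) +++ (c +++ d)) (a +++ (p +++ d))"
proof -
  have pb: "path_in X x x0 (p +++ b)" using p b path_in_join by blast
  have ap: "path_in X x0 x (a +++ p)" using a p path_in_join by blast
  note refl_cd = homotopic_paths_refl_path_in[OF path_in_join[OF c d]]
  have "homotopic_paths X (((a +++ b) +++ (c +++ (p +++ b))) +++ (c +++ d))
      ((a +++ (p +++ b)) +++ (c +++ d))"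
    by (rule homotopic_paths_join_path_in[OF homotopic_paths_cancel_middle[OF a b c pb bc] refl_cd])
      (auto intro!: path_in_join a b c d p)
  also have "homotopic_paths X \<dots> (((a +++ p) +++ b) +++ (c +++ d))"
    by (rule homotopic_paths_join_path_in[OF homotopic_paths_assoc_path_in[OF a p b] refl_cd])
      (auto intro!: path_in_join a b c d p pb)
  also have "homotopic_paths X \<dots> ((a +++ p) +++ d)"
    by (rule homotopic_paths_cancel_middle[OF ap b c d bc])
  also have "homotopic_paths X \<dots> (a +++ (p +++ d))"
    by (rule homotopic_paths_assoc_path_in'[OF a p d])
  finally show ?thesis .
qed

lemma path_class_eq: "homotopic_paths X g h \<Longrightarrow> path_class X g = path_class X h"
  unfolding path_class_def using homotopic_paths_trans homotopic_paths_sym by blast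

lemma homotopic_paths_rep_path_class:
  assumes "path_in X a b g"
  shows "homotopic_paths X g (rep (path_class X g))"
proof -
  have "g \<in> path_class X g" using assms unfolding path_class_def path_in_def by simp
  then have "rep (path_class X g) \<in> path_class X g" unfolding rep_def by (metis someI)
  then show ?thesis unfolding path_class_def by simp
qed

lemma path_in_rep_path_class: "path_in X a b g \<Longrightarrow> path_in X a b (rep (path_class X g))"
  using homotopic_paths_rep_path_class path_in_homotopic by metis

lemma path_class_join_eq:
  assumes c: "path_in X x0 a c" and p: "path_in X a b p" and d: "path_in X b x0 d"
    and pq: "homotopic_paths X p q"
  shows "path_class X (c +++ (p +++ d)) = path_class X (c +++ (q +++ d))"
  by (rule path_class_eq[OF homotopic_paths_join_path_in[OF homotopic_paths_refl_path_in[OF c]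
        homotopic_paths_join_path_in[OF pq homotopic_paths_refl_path_in[OF d] p d]
        c path_in_join[OF p d]]])

lemma carrier_fundamental_group:
  "carrier (fundamental_group X x0) = path_class X ` {g. path_in X x0 x0 g}"
  unfolding fundamental_group_def loops_def path_in_def by (auto simp: image_def)

lemma mult_fundamental_group:
  assumes "path_in X x0 x0 g" "path_in X x0 x0 h"
  shows "path_class X g \<otimes>\<^bsub>fundamental_group X x0\<^esub> path_class X h = path_class X (g +++ h)"
  unfolding fundamental_group_def monoid.simps
  by (rule path_class_eq, rule homotopic_paths_sym,
      rule homotopic_paths_join_path_in[OF homotopic_paths_rep_path_class homotopic_paths_rep_path_class])
    (use assms in auto)

lemma one_fundamental_group:
  fixes X :: "'a::real_normed_vector set"
  shows "\<one>\<^bsub>fundamental_group X x0\<^esub> = path_class X (linepath x0 x0)"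
proof -
  have "linepath x0 x0 = (\<lambda>t. x0)" by (rule ext) (simp add: linepath_def algebra_simps)
  then show ?thesis unfolding fundamental_group_def by simp
qed

lemma group_fundamental_group:
  fixes X :: "'a::real_normed_vector set"
  assumes "x0 \<in> X"
  shows "group (fundamental_group X x0)"
proof (rule groupI)
  let ?G = "fundamental_group X x0"
  note carrier = carrier_fundamental_group[of X x0]
  have const: "path_in X x0 x0 (linepath x0 x0)" using path_in_linepath[OF assms] .
  show "\<one>\<^bsub>?G\<^esub> \<in> carrier ?G" unfolding one_fundamental_group carrier using const by blast
  fix x y assume "x \<in> carrier ?G" "y \<in> carrier ?G"
  then obtain g h where "path_in X x0 x0 g" "path_in X x0 x0 h"
    and "x = path_class X g" "y = path_class X h"
    unfolding carrier by blast
  then show "x \<otimes>\<^bsub>?G\<^esub> y \<in> carrier ?G"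
    unfolding carrier using mult_fundamental_group path_in_join by blast
next
  let ?G = "fundamental_group X x0"
  note carrier = carrier_fundamental_group[of X x0]
  fix x y z assume "x \<in> carrier ?G" "y \<in> carrier ?G" "z \<in> carrier ?G"
  then obtain g h k where g: "path_in X x0 x0 g" and h: "path_in X x0 x0 h"
    and k: "path_in X x0 x0 k"
    and xyz: "x = path_class X g" "y = path_class X h" "z = path_class X k"
    unfolding carrier by blast
  have "x \<otimes>\<^bsub>?G\<^esub> y \<otimes>\<^bsub>?G\<^esub> z = path_class X ((g +++ h) +++ k)"
    using g h k xyz by (simp add: mult_fundamental_group path_in_join)
  also have "\<dots> = path_class X (g +++ (h +++ k))"
    by (rule path_class_eq[OF homotopic_paths_assoc_path_in'[OF g h k]])
  also have "\<dots> = x \<otimes>\<^bsub>?G\<^esub> (y \<otimes>\<^bsub>?G\<^esub> z)"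
    using g h k xyz by (simp add: mult_fundamental_group path_in_join)
  finally show "x \<otimes>\<^bsub>?G\<^esub> y \<otimes>\<^bsub>?G\<^esub> z = x \<otimes>\<^bsub>?G\<^esub> (y \<otimes>\<^bsub>?G\<^esub> z)" .
next
  let ?G = "fundamental_group X x0"
  note carrier = carrier_fundamental_group[of X x0]
  fix x assume "x \<in> carrier ?G"
  then obtain g where g: "path_in X x0 x0 g" and x: "x = path_class X g" unfolding carrier by blast
  have const: "path_in X x0 x0 (linepath x0 x0)" using path_in_linepath[OF assms] .
  show "\<one>\<^bsub>?G\<^esub> \<otimes>\<^bsub>?G\<^esub> x = x"
    unfolding one_fundamental_group x mult_fundamental_group[OF const g]
    by (rule path_class_eq[OF homotopic_paths_lid_path_in[OF g]])
  have r: "path_in X x0 x0 (reversepath g)" using g path_in_reversepath by blast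
  have "path_class X (reversepath g) \<otimes>\<^bsub>?G\<^esub> x = \<one>\<^bsub>?G\<^esub>"
    unfolding one_fundamental_group x mult_fundamental_group[OF r g]
    by (rule path_class_eq[OF homotopic_paths_linv_path_in[OF g]])
  moreover have "path_class X (reversepath g) \<in> carrier ?G" unfolding carrier using r by blast
  ultimately show "\<exists>y\<in>carrier ?G. y \<otimes>\<^bsub>?G\<^esub> x = \<one>\<^bsub>?G\<^esub>" by blast
qed

lemma basepoint_change_induced_map_path_class:
  assumes f: "continuous_on E f" "f ` E \<subseteq> X" and g: "path_in E e e g"
    and \<alpha>: "path_in X (f e) x0 \<alpha>"
  shows "basepoint_change X \<alpha> (induced_map X f (path_class E g))
         = path_class X (reversepath \<alpha> +++ ((f \<circ> g) +++ \<alpha>))"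
proof -
  have fg: "path_in X (f e) (f e) (f \<circ> g)" using path_in_compose[OF g f] .
  have "induced_map X f (path_class E g) = path_class X (f \<circ> g)"
    unfolding induced_map_def
    by (rule path_class_eq[OF homotopic_paths_sym[OF homotopic_paths_continuous_image]])
      (use homotopic_paths_rep_path_class[OF g] f in auto)
  then show ?thesis
    unfolding basepoint_change_def
    using path_class_join_eq[OF path_in_reversepath[OF \<alpha>] path_in_rep_path_class[OF fg] \<alpha>
        homotopic_paths_sym[OF homotopic_paths_rep_path_class[OF fg]]]
    by simp
qed

lemma basepoint_change_induced_map_hom:
  fixes E X :: "'a::real_normed_vector set"
  assumes e: "e \<in> E" and f: "continuous_on E f" "f ` E \<subseteq> X" and \<alpha>: "path_in X (f e) x0 \<alpha>"
  shows "(\<lambda>c. basepoint_change X \<alpha> (induced_map X f c))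
           \<in> hom (fundamental_group E e) (fundamental_group X x0)"
proof (rule homI)
  note r = path_in_reversepath[OF \<alpha>]
  fix c assume "c \<in> carrier (fundamental_group E e)"
  then obtain g where g: "path_in E e e g" and c: "c = path_class E g"
    unfolding carrier_fundamental_group by blast
  show "basepoint_change X \<alpha> (induced_map X f c) \<in> carrier (fundamental_group X x0)"
    unfolding c basepoint_change_induced_map_path_class[OF f g \<alpha>] carrier_fundamental_group
    using path_in_join[OF r path_in_join[OF path_in_compose[OF g f] \<alpha>]] by blast
next
  note r = path_in_reversepath[OF \<alpha>]
  fix c d assume "c \<in> carrier (fundamental_group E e)" "d \<in> carrier (fundamental_group E e)"
  then obtain g k where g: "path_in E e e g" and c: "c = path_class E g"
    and k: "path_in E e e k" and d: "d = path_class E k"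
    unfolding carrier_fundamental_group by blast
  have fg: "path_in X (f e) (f e) (f \<circ> g)" using path_in_compose[OF g f] .
  have fk: "path_in X (f e) (f e) (f \<circ> k)" using path_in_compose[OF k f] .
  show "basepoint_change X \<alpha> (induced_map X f (c \<otimes>\<^bsub>fundamental_group E e\<^esub> d)) =
     basepoint_change X \<alpha> (induced_map X f c) \<otimes>\<^bsub>fundamental_group X x0\<^esub>
     basepoint_change X \<alpha> (induced_map X f d)"
    unfolding c d mult_fundamental_group[OF g k] basepoint_change_induced_map_path_class[OF f g \<alpha>]
      basepoint_change_induced_map_path_class[OF f k \<alpha>]
      basepoint_change_induced_map_path_class[OF f path_in_join[OF g k] \<alpha>]
      mult_fundamental_group[OF path_in_join[OF r path_in_join[OF fg \<alpha>]]
        path_in_join[OF r path_in_join[OF fk \<alpha>]]]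
      path_compose_join
    by (rule path_class_eq[OF homotopic_paths_sym[OF
          homotopic_paths_conjugate_join[OF r \<alpha> fg fk homotopic_paths_rinv_path_in[OF \<alpha>]]]])
qed

lemma induced_map_in_carrier:
  fixes E X :: "'a::real_normed_vector set"
  assumes f: "continuous_on E f" "f ` E \<subseteq> X" and c: "c \<in> carrier (fundamental_group E e)"
  shows "induced_map X f c \<in> carrier (fundamental_group X (f e))"
proof -
  obtain g where "path_in E e e g" and "c = path_class E g"
    using c unfolding carrier_fundamental_group by blast
  then have "path_in X (f e) (f e) (f \<circ> rep c)"
    using path_in_compose[OF path_in_rep_path_class f] by blast
  then show ?thesis unfolding induced_map_def carrier_fundamental_group by blast
qed

lemma continuous_on_factor:
  assumes "continuous_on E F" "continuous_on E s" "s ` E \<subseteq> E" "\<And>w. w \<in> E \<Longrightarrow> f w = F (s w)"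
  shows "continuous_on E f"
proof -
  have "continuous_on E (F \<circ> s)"
    by (rule continuous_on_compose[OF assms(2) continuous_on_subset[OF assms(1,3)]])
  then show ?thesis by (rule continuous_on_eq) (simp add: assms(4))
qed

lemma basepoint_change_induced_map_factor:
  fixes E X :: "'a::real_normed_vector set"
  assumes F: "continuous_on E F" "F ` E \<subseteq> X"
    and s: "continuous_on E s" "s ` E \<subseteq> E" "s e = e"
    and f: "\<And>w. w \<in> E \<Longrightarrow> f w = F (s w)" and \<alpha>: "path_in X (F e) x0 \<alpha>"
    and c: "c \<in> carrier (fundamental_group E e)"
  shows "basepoint_change X \<alpha> (induced_map X f c)
           \<in> (\<lambda>c. basepoint_change X \<alpha> (induced_map X F c)) ` carrier (fundamental_group E e)"
proof -
  obtain g where g: "path_in E e e g" and cg: "c = path_class E g"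
    using c unfolding carrier_fundamental_group by blast
  have sg: "path_in E e e (s \<circ> g)" using path_in_compose[OF g s(1,2)] s(3) by simp
  have f_cont: "continuous_on E f" using continuous_on_factor[OF F(1) s(1,2) f] .
  have f_img: "f ` E \<subseteq> X" using F(2) s(2) f by auto
  have "e \<in> E" using g unfolding path_in_def by (metis pathstart_in_path_image subsetD)
  then have \<alpha>f: "path_in X (f e) x0 \<alpha>" using \<alpha> f s(3) by simp
  have Fsg: "path_in X (F e) (F e) (F \<circ> (s \<circ> g))" using path_in_compose[OF sg F] .
  have "homotopic_paths X (F \<circ> (s \<circ> g)) (f \<circ> g)"
    using Fsg path_in_imp_mem[OF g] f unfolding path_in_def by (intro homotopic_paths_eq) auto
  then have "basepoint_change X \<alpha> (induced_map X f c)
      = basepoint_change X \<alpha> (induced_map X F (path_class E (s \<circ> g)))"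
    unfolding cg basepoint_change_induced_map_path_class[OF F sg \<alpha>]
      basepoint_change_induced_map_path_class[OF f_cont f_img g \<alpha>f]
    using path_class_join_eq[OF path_in_reversepath[OF \<alpha>] Fsg \<alpha>] by simp
  moreover have "path_class E (s \<circ> g) \<in> carrier (fundamental_group E e)"
    unfolding carrier_fundamental_group using sg by blast
  ultimately show ?thesis by blast
qed

lemma basepoint_change_conjugate:
  fixes X :: "'a::real_normed_vector set"
  assumes \<alpha>: "path_in X x x0 \<alpha>" and \<beta>: "path_in X x x0 \<beta>"
    and A: "A \<in> carrier (fundamental_group X x)"
  defines "G \<equiv> fundamental_group X x0"
  defines "u \<equiv> path_class X (reversepath \<alpha> +++ \<beta>)"
  shows "u \<otimes>\<^bsub>G\<^esub> basepoint_change X \<beta> A \<otimes>\<^bsub>G\<^esub> inv\<^bsub>G\<^esub> u = basepoint_change X \<alpha> A"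
proof -
  have r\<alpha>: "path_in X x0 x (reversepath \<alpha>)" and r\<beta>: "path_in X x0 x (reversepath \<beta>)"
    using \<alpha> \<beta> path_in_reversepath by auto
  have \<alpha>\<beta>: "path_in X x0 x0 (reversepath \<alpha> +++ \<beta>)" using path_in_join[OF r\<alpha> \<beta>] .
  have \<beta>\<alpha>: "path_in X x0 x0 (reversepath \<beta> +++ \<alpha>)" using path_in_join[OF r\<beta> \<alpha>] .
  have group: "group G" unfolding G_def using \<alpha> by (intro group_fundamental_group) (auto simp: path_in_def)
  have u: "u \<in> carrier G" unfolding u_def G_def carrier_fundamental_group using \<alpha>\<beta> by blast
  have "path_class X (reversepath \<beta> +++ \<alpha>) \<otimes>\<^bsub>G\<^esub> u = \<one>\<^bsub>G\<^esub>"
    unfolding u_def G_def mult_fundamental_group[OF \<beta>\<alpha> \<alpha>\<beta>] one_fundamental_group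
    by (rule path_class_eq[OF homotopic_paths_trans[OF homotopic_paths_cancel_middle[OF r\<beta> \<alpha> r\<alpha> \<beta>
          homotopic_paths_rinv_path_in[OF \<alpha>]] homotopic_paths_linv_path_in[OF \<beta>]]])
  then have inv_u: "inv\<^bsub>G\<^esub> u = path_class X (reversepath \<beta> +++ \<alpha>)"
    using group.inv_equality[OF group _ u] \<beta>\<alpha> unfolding G_def carrier_fundamental_group by blast
  obtain g where g: "path_in X x x g" and Ag: "A = path_class X g"
    using A unfolding carrier_fundamental_group by blast
  define p where "p = rep A"
  have p: "path_in X x x p" unfolding p_def Ag by (rule path_in_rep_path_class[OF g])
  have Ap: "rep A = p" unfolding p_def ..
  have \<beta>p: "path_in X x0 x0 (reversepath \<beta> +++ (p +++ \<beta>))"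
    using path_in_join[OF r\<beta> path_in_join[OF p \<beta>]] .
  have "u \<otimes>\<^bsub>G\<^esub> basepoint_change X \<beta> A \<otimes>\<^bsub>G\<^esub> inv\<^bsub>G\<^esub> u
      = path_class X (((reversepath \<alpha> +++ \<beta>) +++ (reversepath \<beta> +++ (p +++ \<beta>)))
                       +++ (reversepath \<beta> +++ \<alpha>))"
    unfolding inv_u unfolding u_def G_def basepoint_change_def Ap mult_fundamental_group[OF \<alpha>\<beta> \<beta>p]
      mult_fundamental_group[OF path_in_join[OF \<alpha>\<beta> \<beta>p] \<beta>\<alpha>] ..
  also have "\<dots> = basepoint_change X \<alpha> A"
    unfolding basepoint_change_def Ap
    by (rule path_class_eq[OF homotopic_paths_change_conjugator[OF r\<alpha> \<beta> r\<beta> \<alpha> p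
          homotopic_paths_rinv_path_in[OF \<beta>] homotopic_paths_rinv_path_in[OF \<alpha>]]])
  finally show ?thesis .
qed

lemma basepoint_change_conjugate_factor:
  fixes E X :: "'a::real_normed_vector set"
  assumes F: "continuous_on E F" "F ` E \<subseteq> X"
    and s: "continuous_on E s" "s ` E \<subseteq> E" "s e = e"
    and f: "\<And>w. w \<in> E \<Longrightarrow> f w = F (s w)"
    and \<alpha>: "path_in X (F e) x0 \<alpha>" and \<beta>: "path_in X (F e) x0 \<beta>"
    and c: "c \<in> carrier (fundamental_group E e)"
  defines "G \<equiv> fundamental_group X x0"
  defines "u \<equiv> path_class X (reversepath \<alpha> +++ \<beta>)"
  shows "u \<otimes>\<^bsub>G\<^esub> basepoint_change X \<beta> (induced_map X f c) \<otimes>\<^bsub>G\<^esub> inv\<^bsub>G\<^esub> u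
           \<in> (\<lambda>c. basepoint_change X \<alpha> (induced_map X F c)) ` carrier (fundamental_group E e)"
proof -
  have "e \<in> E" using c unfolding carrier_fundamental_group path_in_def
    by (auto intro: subsetD[OF _ pathstart_in_path_image])
  then have "f e = F e" using f s(3) by simp
  moreover have "f ` E \<subseteq> X" using F(2) s(2) f by auto
  ultimately have A: "induced_map X f c \<in> carrier (fundamental_group X (F e))"
    using induced_map_in_carrier[OF continuous_on_factor[OF F(1) s(1,2) f] _ c] by metis
  show ?thesis
    unfolding G_def u_def basepoint_change_conjugate[OF \<alpha> \<beta> A]
    by (rule basepoint_change_induced_map_factor[OF F s f \<alpha> c])
qed

section \<open>Circles of the Hawaiian earring\<close>

text \<open>\<open>on_earring_circle r\<close> is the circle of radius \<open>1/r\<close> centred at \<open>\<i>/r\<close>, so the earring is the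
  union of \<open>on_earring_circle n\<close> for \<open>n \<ge> 1\<close>; \<open>circle_index\<close> recovers \<open>n\<close> away from \<open>0\<close>
  (and is \<open>0\<close> at \<open>0\<close>).\<close>
definition on_earring_circle :: "real \<Rightarrow> complex \<Rightarrow> bool" where
  "on_earring_circle r z \<longleftrightarrow> (Re z)\<^sup>2 + (Im z)\<^sup>2 = 2 * Im z / r"

definition circle_index :: "complex \<Rightarrow> real" where
  "circle_index z = 2 * Im z / ((Re z)\<^sup>2 + (Im z)\<^sup>2)"

lemma mem_sphere_iff_on_earring_circle:
  assumes "r > 0"
  shows "z \<in> sphere (\<i> * complex_of_real r) r \<longleftrightarrow> on_earring_circle (1/r) z"
proof -
  have "z \<in> sphere (\<i> * complex_of_real r) r \<longleftrightarrow> (cmod (\<i> * complex_of_real r - z))\<^sup>2 = r\<^sup>2"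
    using assms by (simp add: dist_norm)
  also have "\<dots> \<longleftrightarrow> (Re z)\<^sup>2 + (r - Im z)\<^sup>2 = r\<^sup>2"
    unfolding cmod_power2 by simp
  also have "\<dots> \<longleftrightarrow> on_earring_circle (1/r) z"
    unfolding on_earring_circle_def using assms by (simp add: power2_eq_square field_simps)
  finally show ?thesis .
qed

lemma hawaiian_earring_iff:
  "z \<in> hawaiian_earring \<longleftrightarrow> (\<exists>n::nat. n \<ge> 1 \<and> on_earring_circle (real n) z)"
  unfolding hawaiian_earring_def using mem_sphere_iff_on_earring_circle[of "1 / real _"] by auto

lemma zero_in_hawaiian_earring: "0 \<in> hawaiian_earring"
  unfolding hawaiian_earring_iff on_earring_circle_def by (rule exI[of _ 1]) simp

lemma circle_index_zero [simp]: "circle_index 0 = 0"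
  unfolding circle_index_def by simp

lemma circle_index_eq: "on_earring_circle r z \<Longrightarrow> z \<noteq> 0 \<Longrightarrow> r \<noteq> 0 \<Longrightarrow> circle_index z = r"
proof -
  assume q: "on_earring_circle r z" and z: "z \<noteq> 0" and r: "r \<noteq> 0"
  have "(Re z)\<^sup>2 + (Im z)\<^sup>2 \<noteq> 0" using z complex_eq_iff by (auto simp: power2_eq_square)
  then have "Im z \<noteq> 0" using q unfolding on_earring_circle_def by auto
  then show ?thesis using q r unfolding on_earring_circle_def circle_index_def by (simp add: field_simps)
qed

lemma on_earring_circle_scale:
  assumes "on_earring_circle r z" "t > 0"
  shows "on_earring_circle (r / t) (z * complex_of_real t)"
proof -
  have "t * t * ((Re z)\<^sup>2 + (Im z)\<^sup>2) = t * t * (2 * Im z / r)"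
    using assms(1) unfolding on_earring_circle_def by simp
  then show ?thesis unfolding on_earring_circle_def using assms(2) by (simp add: power2_eq_square algebra_simps)
qed

lemma hawaiian_earring_circle_index:
  assumes "z \<in> hawaiian_earring" "z \<noteq> 0"
  obtains n :: nat where "n \<ge> 1" "on_earring_circle (real n) z" "circle_index z = real n"
  using assms hawaiian_earring_iff circle_index_eq by (metis not_one_le_zero of_nat_eq_0_iff)

lemma hawaiian_earring_rescale:
  assumes "z \<in> hawaiian_earring" "z \<noteq> 0" "circle_index z = real n" "m \<ge> 1"
  shows "z * complex_of_real (real n / real m) \<in> hawaiian_earring
      \<and> circle_index (z * complex_of_real (real n / real m)) = real m"
proof -
  obtain k :: nat where k: "k \<ge> 1" "on_earring_circle (real k) z" "circle_index z = real k"
    using hawaiian_earring_circle_index[OF assms(1,2)] .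
  then have n: "n = k" "n \<ge> 1" using assms(3) by auto
  have "on_earring_circle (real n / (real n / real m)) (z * complex_of_real (real n / real m))"
    using k(2) n assms(4) by (intro on_earring_circle_scale) auto
  moreover have "real n / (real n / real m) = real m" using n assms(4) by auto
  ultimately have q: "on_earring_circle (real m) (z * complex_of_real (real n / real m))" by simp
  then show ?thesis using assms(2,4) n hawaiian_earring_iff circle_index_eq[OF q] by auto
qed

lemma circle_index_locally_constant:
  assumes z: "z \<in> hawaiian_earring" "z \<noteq> 0"
  obtains r where "r > 0"
    "\<And>w. w \<in> hawaiian_earring \<Longrightarrow> dist w z < r \<Longrightarrow> circle_index w = circle_index z"
proof -
  have "(Re z)\<^sup>2 + (Im z)\<^sup>2 \<noteq> 0" using z(2) complex_eq_iff by (auto simp: power2_eq_square)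
  then have "isCont circle_index z" unfolding circle_index_def by (intro continuous_intros) auto
  then obtain d where d: "d > 0"
    "\<And>w. dist w z < d \<Longrightarrow> dist (circle_index w) (circle_index z) < 1/2"
    unfolding continuous_at_eps_delta by (metis half_gt_zero_iff zero_less_one)
  obtain n :: nat where n: "circle_index z = real n"
    using hawaiian_earring_circle_index[OF z] by blast
  show ?thesis
  proof (rule that[of "min d (cmod z)"])
    show "min d (cmod z) > 0" using d z by simp
    fix w assume w: "w \<in> hawaiian_earring" "dist w z < min d (cmod z)"
    then have "w \<noteq> 0" by (auto simp: dist_norm)
    then obtain k :: nat where k: "circle_index w = real k"
      using hawaiian_earring_circle_index[OF w(1)] by blast
    have "\<bar>real k - real n\<bar> < 1/2" using d(2)[of w] w k n by (simp add: dist_real_def)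
    then have "k = n" by linarith
    then show "circle_index w = circle_index z" using k n by simp
  qed
qed

lemma continuous_on_hawaiian_earring_circlewise:
  fixes \<Phi> :: "real \<Rightarrow> complex \<Rightarrow> 'b::metric_space"
  assumes at_zero: "continuous (at 0 within hawaiian_earring) (\<lambda>w. \<Phi> (circle_index w) w)"
    and on_circle: "\<And>m. continuous_on {w \<in> hawaiian_earring. circle_index w = m} (\<Phi> m)"
  shows "continuous_on hawaiian_earring (\<lambda>w. \<Phi> (circle_index w) w)"
  unfolding continuous_on_eq_continuous_within
proof
  fix z assume z: "z \<in> hawaiian_earring"
  show "continuous (at z within hawaiian_earring) (\<lambda>w. \<Phi> (circle_index w) w)"
  proof (cases "z = 0")
    case True
    then show ?thesis using at_zero by simp
  next
    case False
    obtain r where r: "r > 0"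
      "\<And>w. w \<in> hawaiian_earring \<Longrightarrow> dist w z < r \<Longrightarrow> circle_index w = circle_index z"
      using circle_index_locally_constant[OF z False] by blast
    let ?S = "{w \<in> hawaiian_earring. circle_index w = circle_index z}"
    have at_eq: "at z within hawaiian_earring = at z within ?S"
      by (rule at_within_nhd[of z "ball z r"]) (use r in \<open>auto simp: dist_commute\<close>)
    have "continuous (at z within ?S) (\<Phi> (circle_index z))"
      using on_circle[of "circle_index z"] z unfolding continuous_on_eq_continuous_within by auto
    then have "continuous (at z within ?S) (\<lambda>w. \<Phi> (circle_index w) w)"
      by (rule continuous_transform_within[where \<delta> = 1]) (use z in auto)
    then show ?thesis unfolding continuous_within at_eq .
  qed
qed

section \<open>Merging two maps on the earring\<close>

text \<open>\<open>earring_merge f\<^sub>1 f\<^sub>2\<close> rescales circle \<open>2k - 1\<close> onto circle \<open>k\<close> and applies \<open>f\<^sub>1\<close>, and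
  circle \<open>2k\<close> onto circle \<open>k\<close> and applies \<open>f\<^sub>2\<close>; \<open>to_odd_circle\<close> and \<open>to_even_circle\<close> are
  the inverse rescalings.\<close>
definition to_odd_circle :: "complex \<Rightarrow> complex" where
  "to_odd_circle w = w * complex_of_real (circle_index w / (2 * circle_index w - 1))"

definition to_even_circle :: "complex \<Rightarrow> complex" where
  "to_even_circle w = w / 2"

definition merge_on_circle ::
    "(complex \<Rightarrow> 'a) \<Rightarrow> (complex \<Rightarrow> 'a) \<Rightarrow> real \<Rightarrow> complex \<Rightarrow> 'a" where
  "merge_on_circle f\<^sub>1 f\<^sub>2 m w =
     (if odd (nat \<lfloor>m\<rfloor>) then f\<^sub>1 (w * complex_of_real (2 * m / (m + 1))) else f\<^sub>2 (w * 2))"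

definition earring_merge :: "(complex \<Rightarrow> 'a) \<Rightarrow> (complex \<Rightarrow> 'a) \<Rightarrow> complex \<Rightarrow> 'a" where
  "earring_merge f\<^sub>1 f\<^sub>2 w = merge_on_circle f\<^sub>1 f\<^sub>2 (circle_index w) w"

lemma to_odd_circle_zero [simp]: "to_odd_circle 0 = 0"
  unfolding to_odd_circle_def by simp

lemma to_even_circle_zero [simp]: "to_even_circle 0 = 0"
  unfolding to_even_circle_def by simp

lemma to_odd_circle_mem:
  assumes "w \<in> hawaiian_earring" "w \<noteq> 0"
  shows "to_odd_circle w \<in> hawaiian_earring \<and> circle_index (to_odd_circle w) = 2 * circle_index w - 1"
proof -
  obtain n :: nat where n: "n \<ge> 1" "circle_index w = real n"
    using hawaiian_earring_circle_index[OF assms] by metis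
  have "real (2 * n - 1) = 2 * real n - 1" using n by (simp add: of_nat_diff)
  moreover have "to_odd_circle w = w * complex_of_real (real n / real (2 * n - 1))"
    unfolding to_odd_circle_def n(2) calculation ..
  ultimately show ?thesis
    using hawaiian_earring_rescale[OF assms n(2), of "2 * n - 1"] n by simp
qed

lemma to_even_circle_mem:
  assumes "w \<in> hawaiian_earring" "w \<noteq> 0"
  shows "to_even_circle w \<in> hawaiian_earring \<and> circle_index (to_even_circle w) = 2 * circle_index w"
proof -
  obtain n :: nat where n: "n \<ge> 1" "circle_index w = real n"
    using hawaiian_earring_circle_index[OF assms] by metis
  have "to_even_circle w = w * complex_of_real (real n / real (2 * n))"
    unfolding to_even_circle_def using n by simp
  then show ?thesis
    using hawaiian_earring_rescale[OF assms n(2), of "2 * n"] n by (simp add: to_even_circle_def)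
qed

lemma to_odd_circle_image: "to_odd_circle ` hawaiian_earring \<subseteq> hawaiian_earring"
  using to_odd_circle_mem zero_in_hawaiian_earring by (metis image_subsetI to_odd_circle_zero)

lemma to_even_circle_image: "to_even_circle ` hawaiian_earring \<subseteq> hawaiian_earring"
  using to_even_circle_mem zero_in_hawaiian_earring by (metis image_subsetI to_even_circle_zero)

lemma continuous_on_to_even_circle: "continuous_on hawaiian_earring to_even_circle"
  unfolding to_even_circle_def by (intro continuous_intros) simp

lemma norm_to_odd_circle_le:
  assumes "w \<in> hawaiian_earring"
  shows "cmod (to_odd_circle w) \<le> cmod w"
proof (cases "w = 0")
  case False
  obtain n :: nat where n: "n \<ge> 1" "circle_index w = real n"
    using hawaiian_earring_circle_index[OF assms False] by metis
  have "\<bar>real n / (2 * real n - 1)\<bar> \<le> 1" using n by auto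
  then have "cmod w * \<bar>real n / (2 * real n - 1)\<bar> \<le> cmod w" by (rule mult_left_le) simp
  then show ?thesis unfolding to_odd_circle_def n(2) norm_mult norm_of_real .
qed simp

lemma continuous_on_to_odd_circle: "continuous_on hawaiian_earring to_odd_circle"
proof -
  have "continuous_on hawaiian_earring
      (\<lambda>w. (\<lambda>m w. w * complex_of_real (m / (2 * m - 1))) (circle_index w) w)"
  proof (rule continuous_on_hawaiian_earring_circlewise)
    show "continuous (at 0 within hawaiian_earring)
        (\<lambda>w. (\<lambda>m w. w * complex_of_real (m / (2 * m - 1))) (circle_index w) w)"
      unfolding continuous_within_eps_delta
      using norm_to_odd_circle_le unfolding to_odd_circle_def
      by (auto simp: dist_norm) (meson le_less_trans)
  qed (intro continuous_intros)
  then show ?thesis unfolding to_odd_circle_def by simp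
qed

lemma rescale_odd_circle:
  assumes w: "w \<in> hawaiian_earring" and odd: "odd (nat \<lfloor>circle_index w\<rfloor>)"
  defines "v \<equiv> w * complex_of_real (2 * circle_index w / (circle_index w + 1))"
  shows "v \<in> hawaiian_earring" and "cmod v \<le> 2 * cmod w"
proof -
  have "w \<noteq> 0" using odd by auto
  then obtain n :: nat where n: "n \<ge> 1" "circle_index w = real n"
    using hawaiian_earring_circle_index[OF w] by metis
  then obtain k where k: "n = 2 * k + 1" using odd by (auto elim: oddE)
  have "2 * circle_index w / (circle_index w + 1) = real n / real (k + 1)"
    unfolding n(2) k by (simp add: field_simps)
  then show "v \<in> hawaiian_earring"
    unfolding v_def using hawaiian_earring_rescale[OF w \<open>w \<noteq> 0\<close> n(2), of "k + 1"] by simp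
  have "\<bar>2 * circle_index w / (circle_index w + 1)\<bar> \<le> 2"
    unfolding n(2) by (simp add: field_simps)
  then have "cmod w * \<bar>2 * circle_index w / (circle_index w + 1)\<bar> \<le> cmod w * 2"
    by (rule mult_left_mono) simp
  then show "cmod v \<le> 2 * cmod w" unfolding v_def norm_mult norm_of_real by linarith
qed

lemma double_even_circle:
  assumes w: "w \<in> hawaiian_earring" and even: "even (nat \<lfloor>circle_index w\<rfloor>)"
  shows "w * 2 \<in> hawaiian_earring"
proof (cases "w = 0")
  case True
  then show ?thesis using zero_in_hawaiian_earring by simp
next
  case False
  obtain n :: nat where n: "n \<ge> 1" "circle_index w = real n"
    using hawaiian_earring_circle_index[OF w False] by metis
  then obtain k where k: "n = 2 * k" "k \<ge> 1" using even by (auto elim: evenE)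
  then have "real n / real k = 2" by simp
  then show ?thesis using hawaiian_earring_rescale[OF w False n(2) k(2)] by simp
qed

lemma earring_merge_zero [simp]: "earring_merge f\<^sub>1 f\<^sub>2 0 = f\<^sub>2 0"
  unfolding earring_merge_def merge_on_circle_def by simp

lemma earring_merge_image:
  assumes "f\<^sub>1 ` hawaiian_earring \<subseteq> X" "f\<^sub>2 ` hawaiian_earring \<subseteq> X"
  shows "earring_merge f\<^sub>1 f\<^sub>2 ` hawaiian_earring \<subseteq> X"
  using assms rescale_odd_circle(1) double_even_circle
  unfolding earring_merge_def merge_on_circle_def by (auto split: if_splits)

lemma continuous_at_zero_earring_merge:
  fixes f\<^sub>1 f\<^sub>2 :: "complex \<Rightarrow> 'a::metric_space"
  assumes f\<^sub>1: "continuous_on hawaiian_earring f\<^sub>1" and f\<^sub>2: "continuous_on hawaiian_earring f\<^sub>2"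
    and "f\<^sub>1 0 = f\<^sub>2 0"
  shows "continuous (at 0 within hawaiian_earring) (earring_merge f\<^sub>1 f\<^sub>2)"
  unfolding continuous_within_eps_delta earring_merge_zero
proof (intro allI impI)
  fix e :: real assume "e > 0"
  obtain d\<^sub>1 where d\<^sub>1: "d\<^sub>1 > 0"
    "\<And>w. w \<in> hawaiian_earring \<Longrightarrow> dist w 0 < d\<^sub>1 \<Longrightarrow> dist (f\<^sub>1 w) (f\<^sub>2 0) < e"
    using f\<^sub>1 zero_in_hawaiian_earring \<open>e > 0\<close> \<open>f\<^sub>1 0 = f\<^sub>2 0\<close>
    unfolding continuous_on_iff by metis
  obtain d\<^sub>2 where d\<^sub>2: "d\<^sub>2 > 0"
    "\<And>w. w \<in> hawaiian_earring \<Longrightarrow> dist w 0 < d\<^sub>2 \<Longrightarrow> dist (f\<^sub>2 w) (f\<^sub>2 0) < e"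
    using f\<^sub>2 zero_in_hawaiian_earring \<open>e > 0\<close> unfolding continuous_on_iff by metis
  show "\<exists>d>0. \<forall>w\<in>hawaiian_earring. dist w 0 < d \<longrightarrow> dist (earring_merge f\<^sub>1 f\<^sub>2 w) (f\<^sub>2 0) < e"
  proof (intro exI[of _ "min d\<^sub>1 d\<^sub>2 / 2"] conjI ballI impI)
    show "min d\<^sub>1 d\<^sub>2 / 2 > 0" using d\<^sub>1 d\<^sub>2 by simp
    fix w assume w: "w \<in> hawaiian_earring" "dist w 0 < min d\<^sub>1 d\<^sub>2 / 2"
    show "dist (earring_merge f\<^sub>1 f\<^sub>2 w) (f\<^sub>2 0) < e"
    proof (cases "odd (nat \<lfloor>circle_index w\<rfloor>)")
      case True
      note v = rescale_odd_circle[OF w(1) True]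
      then show ?thesis using d\<^sub>1(2)[OF v(1)] w(2) True
        unfolding earring_merge_def merge_on_circle_def by simp
    next
      case False
      then show ?thesis using d\<^sub>2(2)[OF double_even_circle[OF w(1)]] w(2)
        unfolding earring_merge_def merge_on_circle_def by (simp add: norm_mult)
    qed
  qed
qed

lemma continuous_on_earring_merge:
  fixes f\<^sub>1 f\<^sub>2 :: "complex \<Rightarrow> 'a::metric_space"
  assumes f\<^sub>1: "continuous_on hawaiian_earring f\<^sub>1" and f\<^sub>2: "continuous_on hawaiian_earring f\<^sub>2"
    and "f\<^sub>1 0 = f\<^sub>2 0"
  shows "continuous_on hawaiian_earring (earring_merge f\<^sub>1 f\<^sub>2)"
  unfolding earring_merge_def
proof (rule continuous_on_hawaiian_earring_circlewise)
  show "continuous (at 0 within hawaiian_earring) (\<lambda>w. merge_on_circle f\<^sub>1 f\<^sub>2 (circle_index w) w)"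
    using continuous_at_zero_earring_merge[OF assms] unfolding earring_merge_def .
next
  fix m
  show "continuous_on {w \<in> hawaiian_earring. circle_index w = m} (merge_on_circle f\<^sub>1 f\<^sub>2 m)"
  proof (cases "odd (nat \<lfloor>m\<rfloor>)")
    case True
    then have eq: "merge_on_circle f\<^sub>1 f\<^sub>2 m = (\<lambda>w. f\<^sub>1 (w * complex_of_real (2 * m / (m + 1))))"
      unfolding merge_on_circle_def by (simp add: fun_eq_iff)
    have "(\<lambda>w. w * complex_of_real (2 * m / (m + 1))) ` {w \<in> hawaiian_earring. circle_index w = m}
        \<subseteq> hawaiian_earring"
      using rescale_odd_circle(1) True by auto
    then show ?thesis
      unfolding eq by (intro continuous_on_compose2[OF f\<^sub>1] continuous_intros)
  next
    case False
    then have "merge_on_circle f\<^sub>1 f\<^sub>2 m = (\<lambda>w. f\<^sub>2 (w * 2))"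
      unfolding merge_on_circle_def by (simp add: fun_eq_iff)
    then show ?thesis
      using double_even_circle False by (auto intro!: continuous_on_compose2[OF f\<^sub>2] continuous_intros)
  qed
qed

lemma earring_merge_to_odd_circle:
  assumes w: "w \<in> hawaiian_earring" and "f\<^sub>1 0 = f\<^sub>2 0"
  shows "earring_merge f\<^sub>1 f\<^sub>2 (to_odd_circle w) = f\<^sub>1 w"
proof (cases "w = 0")
  case True
  then show ?thesis using assms by simp
next
  case False
  obtain n :: nat where n: "n \<ge> 1" "circle_index w = real n"
    using hawaiian_earring_circle_index[OF w False] by metis
  have index: "circle_index (to_odd_circle w) = real (2 * n - 1)"
    using to_odd_circle_mem[OF w False] n by (simp add: of_nat_diff)
  have "odd (2 * n - 1)" using n by presburger
  then have odd: "odd (nat \<lfloor>circle_index (to_odd_circle w)\<rfloor>)"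
    unfolding index floor_of_nat nat_int .
  have v: "to_odd_circle w = w * complex_of_real (real n / real (2 * n - 1))"
    unfolding to_odd_circle_def n(2) using n by (simp add: of_nat_diff)
  have "real n / real (2 * n - 1) * (2 * real (2 * n - 1) / (real (2 * n - 1) + 1)) = 1"
    using n by (simp add: of_nat_diff field_simps)
  then have "to_odd_circle w * complex_of_real
      (2 * circle_index (to_odd_circle w) / (circle_index (to_odd_circle w) + 1)) = w"
    unfolding index unfolding v mult.assoc of_real_mult[symmetric] by simp
  then show ?thesis using odd unfolding earring_merge_def merge_on_circle_def by simp
qed

lemma earring_merge_to_even_circle:
  assumes w: "w \<in> hawaiian_earring"
  shows "earring_merge f\<^sub>1 f\<^sub>2 (to_even_circle w) = f\<^sub>2 w"
proof (cases "w = 0")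
  case True
  then show ?thesis by simp
next
  case False
  obtain n :: nat where n: "n \<ge> 1" "circle_index w = real n"
    using hawaiian_earring_circle_index[OF w False] by metis
  have index: "circle_index (to_even_circle w) = real (2 * n)"
    using to_even_circle_mem[OF w False] n by simp
  have "even (nat \<lfloor>circle_index (to_even_circle w)\<rfloor>)" unfolding index floor_of_nat nat_int by simp
  then show ?thesis unfolding earring_merge_def merge_on_circle_def to_even_circle_def by simp
qed

lemma earring_merge_wedge_maps:
  fixes f\<^sub>1 f\<^sub>2 :: "complex \<Rightarrow> 'a::metric_space"
  assumes f\<^sub>1: "continuous_on hawaiian_earring f\<^sub>1" "f\<^sub>1 ` hawaiian_earring \<subseteq> X" "f\<^sub>1 0 = x"
    and f\<^sub>2: "continuous_on hawaiian_earring f\<^sub>2" "f\<^sub>2 ` hawaiian_earring \<subseteq> X" "f\<^sub>2 0 = x"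
  obtains F where "continuous_on hawaiian_earring F" "F ` hawaiian_earring \<subseteq> X" "F 0 = x"
    "\<And>w. w \<in> hawaiian_earring \<Longrightarrow> f\<^sub>1 w = F (to_odd_circle w)"
    "\<And>w. w \<in> hawaiian_earring \<Longrightarrow> f\<^sub>2 w = F (to_even_circle w)"
proof
  show "continuous_on hawaiian_earring (earring_merge f\<^sub>1 f\<^sub>2)"
    using continuous_on_earring_merge[OF f\<^sub>1(1) f\<^sub>2(1)] f\<^sub>1(3) f\<^sub>2(3) by simp
  show "earring_merge f\<^sub>1 f\<^sub>2 ` hawaiian_earring \<subseteq> X" by (rule earring_merge_image[OF f\<^sub>1(2) f\<^sub>2(2)])
  show "earring_merge f\<^sub>1 f\<^sub>2 0 = x" using f\<^sub>2(3) by simp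
  fix w assume "w \<in> hawaiian_earring"
  show "f\<^sub>1 w = earring_merge f\<^sub>1 f\<^sub>2 (to_odd_circle w)"
    using earring_merge_to_odd_circle[OF \<open>w \<in> hawaiian_earring\<close>, of f\<^sub>1 f\<^sub>2] f\<^sub>1(3) f\<^sub>2(3) by simp
  show "f\<^sub>2 w = earring_merge f\<^sub>1 f\<^sub>2 (to_even_circle w)"
    using earring_merge_to_even_circle[OF \<open>w \<in> hawaiian_earring\<close>, of f\<^sub>1 f\<^sub>2] by simp
qed

lemma wedge_pointE:
  assumes "wedge_point X x0 H x"
  obtains f \<alpha> where "continuous_on hawaiian_earring f" "f ` hawaiian_earring \<subseteq> X" "f 0 = x"
    "path_in X x x0 \<alpha>" "H = (\<lambda>c. basepoint_change X \<alpha> (induced_map X f c)) ` carrier HE_group"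
proof -
  obtain \<psi> f \<alpha> where H: "H = \<psi> ` carrier HE_group"
    and f: "continuous_on hawaiian_earring f" "f ` hawaiian_earring \<subseteq> X" "f 0 = x"
    and \<alpha>: "path_in X x x0 \<alpha>"
    and \<psi>: "\<And>c. c \<in> carrier HE_group \<Longrightarrow> \<psi> c = basepoint_change X \<alpha> (induced_map X f c)"
    using assms unfolding wedge_point_def path_in_def by metis
  have "H = (\<lambda>c. basepoint_change X \<alpha> (induced_map X f c)) ` carrier HE_group"
    unfolding H by (rule image_cong) (simp_all add: \<psi>)
  then show ?thesis using that f \<alpha> by blast
qed

lemma pseudo_HE_subgroup_basepoint_change_image:
  assumes "x0 \<in> X" and F: "continuous_on hawaiian_earring F" "F ` hawaiian_earring \<subseteq> X"
    and \<alpha>: "path_in X (F 0) x0 \<alpha>"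
    and "H' \<subseteq> (\<lambda>c. basepoint_change X \<alpha> (induced_map X F c)) ` carrier HE_group" "uncountable H'"
  shows "pseudo_HE_subgroup X x0 ((\<lambda>c. basepoint_change X \<alpha> (induced_map X F c)) ` carrier HE_group)"
proof -
  let ?\<psi> = "\<lambda>c. basepoint_change X \<alpha> (induced_map X F c)"
  have hom: "?\<psi> \<in> hom HE_group (fundamental_group X x0)"
    by (rule basepoint_change_induced_map_hom[OF zero_in_hawaiian_earring F \<alpha>])
  then have "group_hom HE_group (fundamental_group X x0) ?\<psi>"
    using group_fundamental_group[OF zero_in_hawaiian_earring] group_fundamental_group[OF assms(1)]
    by (simp add: group_hom_def group_hom_axioms_def)
  then have "subgroup (?\<psi> ` carrier HE_group) (fundamental_group X x0)"
    by (rule group_hom.img_is_subgroup)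
  moreover have "uncountable (?\<psi> ` carrier HE_group)" using assms(5,6) countable_subset by blast
  ultimately show ?thesis unfolding pseudo_HE_subgroup_def using hom by blast
qed

theorem mainTheorem14:
  fixes X :: "complex set" and x0 x :: complex
    and H1 H2 :: "(real \<Rightarrow> complex) set set"
  assumes "planar_peano_continuum X" and "x0 \<in> X"
    and "pseudo_HE_subgroup X x0 H1" and "pseudo_HE_subgroup X x0 H2"
    and "wedge_point X x0 H1 x" and "wedge_point X x0 H2 x"
  shows "HE_equiv X x0 H1 H2"
proof -
  let ?G = "fundamental_group X x0"
  obtain f\<^sub>1 \<alpha> where f\<^sub>1: "continuous_on hawaiian_earring f\<^sub>1" "f\<^sub>1 ` hawaiian_earring \<subseteq> X" "f\<^sub>1 0 = x"
    and \<alpha>: "path_in X x x0 \<alpha>" and H1: "H1 = (\<lambda>c. basepoint_change X \<alpha> (induced_map X f\<^sub>1 c)) ` carrier HE_group"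
    using wedge_pointE[OF assms(5)] .
  obtain f\<^sub>2 \<beta> where f\<^sub>2: "continuous_on hawaiian_earring f\<^sub>2" "f\<^sub>2 ` hawaiian_earring \<subseteq> X" "f\<^sub>2 0 = x"
    and \<beta>: "path_in X x x0 \<beta>" and H2: "H2 = (\<lambda>c. basepoint_change X \<beta> (induced_map X f\<^sub>2 c)) ` carrier HE_group"
    using wedge_pointE[OF assms(6)] .
  obtain F where F: "continuous_on hawaiian_earring F" "F ` hawaiian_earring \<subseteq> X" and "F 0 = x"
    and F\<^sub>1: "\<And>w. w \<in> hawaiian_earring \<Longrightarrow> f\<^sub>1 w = F (to_odd_circle w)"
    and F\<^sub>2: "\<And>w. w \<in> hawaiian_earring \<Longrightarrow> f\<^sub>2 w = F (to_even_circle w)"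
    using earring_merge_wedge_maps[OF f\<^sub>1 f\<^sub>2] by blast
  then have \<alpha>F: "path_in X (F 0) x0 \<alpha>" and \<beta>F: "path_in X (F 0) x0 \<beta>" using \<alpha> \<beta> by simp_all
  define H where "H = (\<lambda>c. basepoint_change X \<alpha> (induced_map X F c)) ` carrier HE_group"
  define u where "u = path_class X (reversepath \<alpha> +++ \<beta>)"
  have "H1 \<subseteq> H"
    unfolding H1 H_def using basepoint_change_induced_map_factor[OF F continuous_on_to_odd_circle
        to_odd_circle_image to_odd_circle_zero F\<^sub>1 \<alpha>F] by blast
  moreover have "(\<lambda>h. u \<otimes>\<^bsub>?G\<^esub> h \<otimes>\<^bsub>?G\<^esub> inv\<^bsub>?G\<^esub> u) ` H2 \<subseteq> H"
    unfolding H2 H_def u_def using basepoint_change_conjugate_factor[OF F continuous_on_to_even_circle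
        to_even_circle_image to_even_circle_zero F\<^sub>2 \<alpha>F \<beta>F] by blast
  moreover have "u \<in> carrier ?G"
    unfolding u_def carrier_fundamental_group using path_in_join[OF path_in_reversepath[OF \<alpha>] \<beta>] by blast
  moreover have "pseudo_HE_subgroup X x0 H"
    using assms(3) \<open>H1 \<subseteq> H\<close> pseudo_HE_subgroup_basepoint_change_image[OF assms(2) F \<alpha>F]
    unfolding pseudo_HE_subgroup_def H_def by blast
  ultimately show ?thesis unfolding HE_equiv_def by blast
qed

end
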